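(* Let $\{P_\theta:\theta\in\Theta\}$ be a family of distributions on a measurable space $\mathbb{X}$, let $\mathcal{L}$ be a measurable nonnegative loss, and for an estimator $\varphi$ (a measurable function of finite sequences of elements of $\mathbb{X}$) define ${\sf risk}_n(\varphi,\theta)=\mathbb{E}_\theta[\mathcal{L}(\varphi(X_1,\dots,X_n),\theta)]$ with $X_1,\dots,X_n$ i.i.d. from $P_\theta$, ${\sf risk}_n(\varphi)=\sup_{\theta\in\Theta}{\sf risk}_n(\varphi,\theta)$, and the minimax risk $R(n)=\inf_\varphi {\sf risk}_n(\varphi)$, assumed finite for all $n$ large enough. Suppose $\limsup_{a\to\infty}\limsup_{n\to\infty} R(an)/R(n)=0$. Then for any estimator $\varphi$ that can be computed in $o(n)$ time when applied to a sample of size $n$, ${\sf risk}_n(\varphi)/R(n)\to\infty$ as $n\to\infty$.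
   Context: Computational model: it takes one unit of time to register (read) an observation for further processing, so an algorithm running in time $b(n)$ on a sample of size $n$ can read at most $b(n)$ observations, where the index of each observation read may depend on the values of previously read observations. *)

theory Defs
  imports "HOL-Probability.Probability"
begin

definition risk :: "('t \<Rightarrow> 'x measure) \<Rightarrow> ('b \<Rightarrow> 't \<Rightarrow> real) \<Rightarrow> nat
    \<Rightarrow> ((nat \<Rightarrow> 'x) \<Rightarrow> 'b) \<Rightarrow> 't \<Rightarrow> ennreal" where
  "risk P L n f \<theta> = (\<integral>\<^sup>+ x. ennreal (L (f x) \<theta>) \<partial>(PiM {..<n} (\<lambda>_. P \<theta>)))"

definition sup_risk :: "('t \<Rightarrow> 'x measure) \<Rightarrow> ('b \<Rightarrow> 't \<Rightarrow> real) \<Rightarrow> 't set \<Rightarrow> nat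
    \<Rightarrow> ((nat \<Rightarrow> 'x) \<Rightarrow> 'b) \<Rightarrow> ennreal" where
  "sup_risk P L \<Theta> n f = (SUP \<theta>\<in>\<Theta>. risk P L n f \<theta>)"

definition minimax :: "'x measure \<Rightarrow> 'b measure \<Rightarrow> ('t \<Rightarrow> 'x measure) \<Rightarrow> ('b \<Rightarrow> 't \<Rightarrow> real)
    \<Rightarrow> 't set \<Rightarrow> nat \<Rightarrow> ennreal" where
  "minimax M N P L \<Theta> n = (INF f \<in> measurable (PiM {..<n} (\<lambda>_. M)) N. sup_risk P L \<Theta> n f)"

text \<open>Adaptive reading of observations: q j v is the index of the (j+1)-th observation read,
  given the values v (on {..<j}) of the first j observations read.\<close>
primrec reads :: "(nat \<Rightarrow> (nat \<Rightarrow> 'x) \<Rightarrow> nat) \<Rightarrow> (nat \<Rightarrow> 'x) \<Rightarrow> nat \<Rightarrow> (nat \<Rightarrow> 'x)" where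
  "reads q x 0 = (\<lambda>_. undefined)"
| "reads q x (Suc j) = (reads q x j)(j := x (q j (reads q x j)))"

text \<open>The map f on samples of size n can be computed by an algorithm reading at most k
  observations (indices chosen adaptively).\<close>
definition computable_reading :: "'x measure \<Rightarrow> 'b measure \<Rightarrow> nat \<Rightarrow> nat
    \<Rightarrow> ((nat \<Rightarrow> 'x) \<Rightarrow> 'b) \<Rightarrow> bool" where
  "computable_reading M N n k f \<longleftrightarrow>
     (\<exists>q out.
        (\<forall>j<k. q j \<in> measurable (PiM {..<j} (\<lambda>_. M)) (count_space UNIV)
              \<and> (\<forall>v\<in>space (PiM {..<j} (\<lambda>_. M)). q j v < n))
      \<and> out \<in> measurable (PiM {..<k} (\<lambda>_. M)) N
      \<and> (\<forall>x\<in>space (PiM {..<n} (\<lambda>_. M)). f x = out (reads q x k)))"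

definition sublinear_time :: "'x measure \<Rightarrow> 'b measure \<Rightarrow> (nat \<Rightarrow> (nat \<Rightarrow> 'x) \<Rightarrow> 'b) \<Rightarrow> bool" where
  "sublinear_time M N \<phi> \<longleftrightarrow>
     (\<exists>b::nat \<Rightarrow> nat. (\<lambda>n. real (b n) / real n) \<longlonglongrightarrow> 0
        \<and> (\<forall>\<^sub>F n in sequentially. computable_reading M N n (b n) (\<phi> n)))"

end

theory Submission
  imports Defs
begin

text \<open>An algorithm that reads at most k observations of an i.i.d. sample of size n sees
  nothing but k i.i.d. observations: simulating it on a fresh sample v of size k, where the
  l-th read returns v(l) unless its index was read before, yields the same distribution of
  outputs. Indeed, planting the fresh values at the indices read into an independent sample x
  of size n gives back the product measure, since each planting step resamples one coordinate.
  Hence the worst-case risk of such an estimator is at least the minimax risk R(k). For k = o(n)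
  the decay hypothesis and the monotonicity of R give R(n) = o(R(k)), so the ratio diverges.\<close>

lemma Least_cong_below:
  fixes P Q :: "nat \<Rightarrow> bool"
  assumes "P j" and agree: "\<And>l. l \<le> j \<Longrightarrow> P l \<longleftrightarrow> Q l"
  shows "(LEAST l. P l) = (LEAST l. Q l)"
proof -
  have le: "(LEAST l. P l) \<le> j"
    using \<open>P j\<close> by (rule Least_le)
  have "(LEAST l. Q l) = (LEAST l. P l)"
  proof (rule Least_equality)
    show "Q (LEAST l. P l)"
      using agree[OF le] LeastI[of P, OF \<open>P j\<close>] by simp
    show "(LEAST l. P l) \<le> l" if "Q l" for l
      using that agree[of l] le by (cases "l \<le> j") (auto intro: Least_le)
  qed
  then show ?thesis by simp
qed

lemma nn_integral_PiM_resample_coordinate: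
  assumes Q: "prob_space Q" and I: "finite I" "i \<in> I"
    and H[measurable]: "H \<in> borel_measurable (PiM I (\<lambda>_. Q))"
  shows "(\<integral>\<^sup>+ a. (\<integral>\<^sup>+ x. H (x(i := a)) \<partial>PiM I (\<lambda>_. Q)) \<partial>Q) = (\<integral>\<^sup>+ x. H x \<partial>PiM I (\<lambda>_. Q))"
proof -
  interpret product_prob_space "\<lambda>_. Q"
    using Q by (simp add: product_prob_space_def product_prob_space_axioms_def
        product_sigma_finite_def prob_space_imp_sigma_finite)
  have I_split: "I = insert i (I - {i})" using I by auto
  have integral_split: "(\<integral>\<^sup>+ x. G x \<partial>PiM I (\<lambda>_. Q))
      = (\<integral>\<^sup>+ a. (\<integral>\<^sup>+ y. G (y(i := a)) \<partial>PiM (I - {i}) (\<lambda>_. Q)) \<partial>Q)"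
    if "G \<in> borel_measurable (PiM I (\<lambda>_. Q))" for G
    using I that by (subst I_split, subst product_nn_integral_insert_rev) (auto simp: insert_absorb)
  have "(\<integral>\<^sup>+ x. H (x(i := a)) \<partial>PiM I (\<lambda>_. Q)) = (\<integral>\<^sup>+ y. H (y(i := a)) \<partial>PiM (I - {i}) (\<lambda>_. Q))"
    if "a \<in> space Q" for a
  proof -
    have "(\<lambda>x. H (x(i := a))) \<in> borel_measurable (PiM I (\<lambda>_. Q))"
      using that I by (subst I_split) (measurable, auto intro: measurable_fun_upd)
    then show ?thesis
      by (simp add: integral_split prob_space.emeasure_space_1[OF Q])
  qed
  then show ?thesis
    by (simp add: integral_split cong: nn_integral_cong)
qed

lemma ennreal_less_divide_if_less_mult:
  fixes r s :: ennreal and c :: real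
  assumes r: "0 < r" "r < \<infinity>" and c: "0 \<le> c" and less: "r < ennreal (1 / (c + 1)) * s"
  shows "ennreal c < s / r"
proof (rule ccontr)
  assume "\<not> ennreal c < s / r"
  have "ennreal (1 / (c + 1)) * ennreal (c + 1) = ennreal (1 / (c + 1) * (c + 1))"
    using c by (intro ennreal_mult[symmetric]) auto
  also have "\<dots> = 1"
    using c by simp
  finally have inverse: "ennreal (1 / (c + 1)) * ennreal (c + 1) = 1" .
  have "s = s / r * r"
    using r by (simp add: ennreal_divide_times)
  also have "\<dots> \<le> ennreal c * r"
    using \<open>\<not> ennreal c < s / r\<close> by (intro mult_right_mono) auto
  also have "\<dots> \<le> ennreal (c + 1) * r"
    by (intro mult_right_mono ennreal_leI) auto
  also have "\<dots> < ennreal (c + 1) * (ennreal (1 / (c + 1)) * s)"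
    using c by (intro ennreal_mult_strict_left_mono[OF less]) (auto intro: add_nonneg_pos)
  also have "\<dots> = ennreal (1 / (c + 1)) * ennreal (c + 1) * s"
    by (simp only: mult_ac)
  also have "\<dots> = s"
    using inverse by simp
  finally show False by simp
qed

text \<open>Simulation of an adaptive reader q on a fresh sample v: its l-th read returns v l
  if the index it asks for was not read before, and otherwise the value returned at the first
  step that read this index.\<close>
primrec reads_fresh :: "(nat \<Rightarrow> (nat \<Rightarrow> 'x) \<Rightarrow> nat) \<Rightarrow> (nat \<Rightarrow> 'x) \<Rightarrow> nat \<Rightarrow> (nat \<Rightarrow> 'x)" where
  "reads_fresh q v 0 = (\<lambda>_. undefined)"
| "reads_fresh q v (Suc j) = (reads_fresh q v j)(j :=
     v (LEAST l. q l (restrict (reads_fresh q v j) {..<l}) = q j (reads_fresh q v j)))"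

definition read_index :: "(nat \<Rightarrow> (nat \<Rightarrow> 'x) \<Rightarrow> nat) \<Rightarrow> (nat \<Rightarrow> 'x) \<Rightarrow> nat \<Rightarrow> nat" where
  "read_index q v l = q l (reads_fresh q v l)"

definition plant :: "(nat \<Rightarrow> (nat \<Rightarrow> 'x) \<Rightarrow> nat) \<Rightarrow> nat \<Rightarrow> (nat \<Rightarrow> 'x) \<Rightarrow> (nat \<Rightarrow> 'x) \<Rightarrow> (nat \<Rightarrow> 'x)" where
  "plant q k v x i =
     (if i \<in> read_index q v ` {..<k} then v (LEAST l. read_index q v l = i) else x i)"

lemma reads_fresh_extensional: "reads_fresh q v j \<in> extensional {..<j}"
  by (induction j) (auto simp: extensional_def)

lemma restrict_reads_fresh: "l \<le> j \<Longrightarrow> restrict (reads_fresh q v j) {..<l} = reads_fresh q v l"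
proof (induction j)
  case 0
  then show ?case using reads_fresh_extensional[of q v 0] by (auto simp: extensional_def)
next
  case (Suc j)
  show ?case
  proof (cases "l = Suc j")
    case True
    then show ?thesis by (simp only: extensional_restrict[OF reads_fresh_extensional])
  next
    case False
    then have "l \<le> j" using Suc.prems by simp
    then have "restrict (reads_fresh q v (Suc j)) {..<l} = restrict (reads_fresh q v j) {..<l}"
      by (auto simp: restrict_def fun_eq_iff)
    also have "\<dots> = reads_fresh q v l" using \<open>l \<le> j\<close> by (rule Suc.IH)
    finally show ?thesis .
  qed
qed

lemma reads_fresh_Suc:
  "reads_fresh q v (Suc j) = (reads_fresh q v j)(j := v (LEAST l. read_index q v l = read_index q v j))"
proof -
  have "(LEAST l. q l (restrict (reads_fresh q v j) {..<l}) = q j (reads_fresh q v j))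
      = (LEAST l. read_index q v l = read_index q v j)"
    by (rule Least_cong_below[of _ j]) (simp_all add: read_index_def restrict_reads_fresh)
  then show ?thesis by simp
qed

declare reads_fresh.simps(2)[simp del]

lemma Least_read_index_le: "(LEAST l. read_index q v l = read_index q v j) \<le> j"
  by (rule Least_le) (rule refl)

lemma reads_fresh_cong: "(\<And>l. l < j \<Longrightarrow> v l = v' l) \<Longrightarrow> reads_fresh q v j = reads_fresh q v' j"
proof (induction j)
  case (Suc j)
  then have IH: "reads_fresh q v j = reads_fresh q v' j" by simp
  have "read_index q v l = read_index q v' l" if "l \<le> j" for l
    using IH that by (metis read_index_def restrict_reads_fresh)
  then have "(LEAST l. read_index q v l = read_index q v j) = (LEAST l. read_index q v' l = read_index q v' j)"
    by (intro Least_cong_below[of _ j]) auto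
  then show ?case
    using IH Suc.prems Least_read_index_le[of q v j] by (simp add: reads_fresh_Suc)
qed simp

lemma read_index_cong: "(\<And>l'. l' < l \<Longrightarrow> v l' = v' l') \<Longrightarrow> read_index q v l = read_index q v' l"
  unfolding read_index_def by (metis reads_fresh_cong)

lemma reads_plant: "j \<le> k \<Longrightarrow> reads q (plant q k v x) j = reads_fresh q v j"
  by (induction j) (auto simp: plant_def reads_fresh_Suc read_index_def)

lemma reads_fresh_space:
  "(\<And>l. l < j \<Longrightarrow> v l \<in> space M) \<Longrightarrow> reads_fresh q v j \<in> space (PiM {..<j} (\<lambda>_. M))"
proof (induction j)
  case (Suc j)
  then show ?case
    using Least_read_index_le[of q v j]
    by (auto simp: reads_fresh_Suc space_PiM PiE_iff extensional_def)
qed (simp add: space_PiM)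

lemma plant_Suc:
  "plant q (Suc k) (u(k := a)) x = plant q k u (x(read_index q u k := a))"
proof
  fix i
  let ?r = "read_index q u" and ?r' = "read_index q (u(k := a))"
  have r': "?r' l = ?r l" if "l \<le> k" for l
    using that by (intro read_index_cong) auto
  then have image_r': "?r' ` {..<Suc k} = insert (?r k) (?r ` {..<k})"
    by (auto simp: lessThan_Suc)
  show "plant q (Suc k) (u(k := a)) x i = plant q k u (x(?r k := a)) i"
  proof (cases "i \<in> ?r ` {..<k}")
    case True
    then obtain l0 where l0: "l0 < k" "?r l0 = i" by auto
    have "(LEAST l. ?r' l = i) = (LEAST l. ?r l = i)"
      using l0 r' by (intro Least_cong_below[of _ l0]) auto
    moreover have "(LEAST l. ?r l = i) < k"
      using l0 Least_le[of "\<lambda>l. ?r l = i" l0] by simp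
    ultimately show ?thesis
      using True by (simp add: plant_def image_r')
  next
    case False
    show ?thesis
    proof (cases "i = ?r k")
      case True
      have "(LEAST l. ?r' l = i) = k"
      proof (rule Least_equality)
        show "?r' k = i" using True r' by simp
        show "k \<le> l" if "?r' l = i" for l
          using that False r'[of l] by (cases "l < k") auto
      qed
      then show ?thesis
        using False True by (simp add: plant_def image_r')
    next
      case False
      then show ?thesis
        using \<open>i \<notin> ?r ` {..<k}\<close> by (simp add: plant_def image_r')
    qed
  qed
qed

lemma measurable_reads_fresh:
  assumes "j \<le> k"
    and q_meas: "\<And>l. l < k \<Longrightarrow> q l \<in> measurable (PiM {..<l} (\<lambda>_. M)) (count_space UNIV)"
  shows "(\<lambda>v. reads_fresh q v j) \<in> measurable (PiM {..<k} (\<lambda>_. M)) (PiM {..<j} (\<lambda>_. M))"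
  using assms(1)
proof (induction j)
  case 0
  then show ?case by (simp add: space_PiM)
next
  case (Suc j)
  then have IH[measurable]:
    "(\<lambda>v. reads_fresh q v j) \<in> measurable (PiM {..<k} (\<lambda>_. M)) (PiM {..<j} (\<lambda>_. M))"
    by simp
  have [measurable]:
    "(\<lambda>v. read_index q v l) \<in> measurable (PiM {..<k} (\<lambda>_. M)) (count_space UNIV)" if "l \<le> j" for l
  proof -
    have [measurable]: "q l \<in> measurable (PiM {..<l} (\<lambda>_. M)) (count_space UNIV)"
      using that Suc.prems q_meas by simp
    have [measurable]: "(\<lambda>v. restrict (reads_fresh q v j) {..<l})
        \<in> measurable (PiM {..<k} (\<lambda>_. M)) (PiM {..<l} (\<lambda>_. M))"
      using that by (intro measurable_compose[OF IH measurable_restrict_subset]) auto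
    show ?thesis
      using that by (simp add: read_index_def restrict_reads_fresh[symmetric])
  qed
  \<comment> \<open>Bounding the search by j keeps it within the reads q l, l < k, known to be measurable.\<close>
  have first_read_meas: "(\<lambda>v. LEAST l. l \<le> j \<and> read_index q v l = read_index q v j)
      \<in> measurable (PiM {..<k} (\<lambda>_. M)) (count_space UNIV)"
    by measurable
  have component_meas: "(\<lambda>v. v (min l j)) \<in> measurable (PiM {..<k} (\<lambda>_. M)) M" for l
    using Suc.prems by (intro measurable_component_singleton) (simp add: min_less_iff_disj)
  have "(\<lambda>v. v (min (LEAST l. l \<le> j \<and> read_index q v l = read_index q v j) j))
      \<in> measurable (PiM {..<k} (\<lambda>_. M)) M"
    by (rule measurable_compose_countable'[where f="\<lambda>l v. v (min l j)" and I=UNIV])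
      (simp_all only: component_meas first_read_meas UNIV_I countableI_type)
  moreover have "min (LEAST l. l \<le> j \<and> read_index q v l = read_index q v j) j
      = (LEAST l. read_index q v l = read_index q v j)" for v
  proof -
    have "(LEAST l. l \<le> j \<and> read_index q v l = read_index q v j)
        = (LEAST l. read_index q v l = read_index q v j)"
      by (rule Least_cong_below[of _ j]) auto
    then show ?thesis using min_absorb1[OF Least_read_index_le[of q v j]] by simp
  qed
  ultimately have [measurable]: "(\<lambda>v. v (LEAST l. read_index q v l = read_index q v j))
      \<in> measurable (PiM {..<k} (\<lambda>_. M)) M"
    by simp
  show ?case
    unfolding reads_fresh_Suc by (rule measurable_fun_upd[where J="{..<j}"]) (auto simp: lessThan_Suc)
qed

lemma measurable_read_index:
  assumes "l < k"
    and q_meas: "\<And>l. l < k \<Longrightarrow> q l \<in> measurable (PiM {..<l} (\<lambda>_. M)) (count_space UNIV)"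
  shows "(\<lambda>v. read_index q v l) \<in> measurable (PiM {..<k} (\<lambda>_. M)) (count_space UNIV)"
  unfolding read_index_def
  using measurable_compose[OF measurable_reads_fresh q_meas] assms by simp

lemma plant_space:
  assumes q_bnd: "\<And>l s. l < k \<Longrightarrow> s \<in> space (PiM {..<l} (\<lambda>_. M)) \<Longrightarrow> q l s < n"
    and v: "v \<in> space (PiM {..<k} (\<lambda>_. M))" and x: "x \<in> space (PiM {..<n} (\<lambda>_. M))"
  shows "plant q k v x \<in> space (PiM {..<n} (\<lambda>_. M))"
proof -
  have "read_index q v l < n" if "l < k" for l
    unfolding read_index_def using that v
    by (intro q_bnd reads_fresh_space) (auto simp: space_PiM PiE_iff)
  moreover have "v (LEAST l. read_index q v l = i) \<in> space M"
    if "i \<in> read_index q v ` {..<k}" for i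
  proof -
    from that obtain l0 where "l0 < k" "read_index q v l0 = i" by auto
    then have "(LEAST l. read_index q v l = i) < k"
      using Least_le[of "\<lambda>l. read_index q v l = i" l0] by simp
    then show ?thesis using v by (auto simp: space_PiM PiE_iff)
  qed
  ultimately show ?thesis
    using x by (auto simp: space_PiM PiE_iff extensional_def plant_def)
qed

lemma measurable_plant:
  assumes q_meas: "\<And>l. l < k \<Longrightarrow> q l \<in> measurable (PiM {..<l} (\<lambda>_. M)) (count_space UNIV)"
    and q_bnd: "\<And>l s. l < k \<Longrightarrow> s \<in> space (PiM {..<l} (\<lambda>_. M)) \<Longrightarrow> q l s < n"
  shows "(\<lambda>(v, x). plant q k v x)
    \<in> measurable (PiM {..<k} (\<lambda>_. M) \<Otimes>\<^sub>M PiM {..<n} (\<lambda>_. M)) (PiM {..<n} (\<lambda>_. M))"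
proof (rule measurable_PiM_single')
  let ?S = "PiM {..<k} (\<lambda>_. M) \<Otimes>\<^sub>M PiM {..<n} (\<lambda>_. M)"
  fix i assume "i \<in> {..<n}"
  note [measurable] = measurable_read_index[OF _ q_meas]
  \<comment> \<open>The value k stands for an index i never read; v is then evaluated below k only.\<close>
  define first_read where "first_read v = (LEAST l. l = k \<or> (l < k \<and> read_index q v l = i))" for v
  have first_read_meas: "(\<lambda>p. first_read (fst p)) \<in> measurable ?S (count_space UNIV)"
    unfolding first_read_def by measurable
  have component_meas: "(\<lambda>p. if l < k then fst p l else snd p i) \<in> measurable ?S M" for l
    using \<open>i \<in> {..<n}\<close> by (cases "l < k"; simp; measurable)
  have "(\<lambda>p. if first_read (fst p) < k then fst p (first_read (fst p)) else snd p i) \<in> measurable ?S M"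
    by (rule measurable_compose_countable'[where f="\<lambda>l p. if l < k then fst p l else snd p i"
          and g="\<lambda>p. first_read (fst p)" and I=UNIV])
      (simp_all only: component_meas first_read_meas UNIV_I countableI_type)
  moreover have "plant q k v x i = (if first_read v < k then v (first_read v) else x i)" for v x
  proof (cases "i \<in> read_index q v ` {..<k}")
    case True
    then obtain l0 where "l0 < k" "read_index q v l0 = i" by auto
    then have "first_read v = (LEAST l. read_index q v l = i)"
      unfolding first_read_def by (intro Least_cong_below[of _ l0]) auto
    moreover have "first_read v < k"
      using \<open>l0 < k\<close> \<open>read_index q v l0 = i\<close> Least_le[of _ l0] unfolding first_read_def
      by (metis (mono_tags, lifting) order.strict_trans1)
    ultimately show ?thesis using True by (simp add: plant_def)
  next
    case False
    then have "first_read v = k"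
      unfolding first_read_def by (intro Least_equality) auto
    then show ?thesis using False by (simp add: plant_def)
  qed
  ultimately show "(\<lambda>w. (case w of (v, x) \<Rightarrow> plant q k v x) i) \<in> measurable ?S M"
    by (simp add: case_prod_beta)
next
  show "(\<lambda>(v, x). plant q k v x) \<in> space (PiM {..<k} (\<lambda>_. M) \<Otimes>\<^sub>M PiM {..<n} (\<lambda>_. M))
      \<rightarrow> (\<Pi>\<^sub>E i\<in>{..<n}. space M)"
  proof (clarsimp simp: space_pair_measure)
    fix v x assume "v \<in> space (PiM {..<k} (\<lambda>_. M))" "x \<in> space (PiM {..<n} (\<lambda>_. M))"
    from plant_space[OF q_bnd this] show "plant q k v x \<in> (\<Pi>\<^sub>E i\<in>{..<n}. space M)"
      by (simp add: space_PiM)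
  qed
qed

lemma nn_integral_plant:
  assumes Q: "prob_space Q"
    and q_meas: "\<And>l. l < k \<Longrightarrow> q l \<in> measurable (PiM {..<l} (\<lambda>_. Q)) (count_space UNIV)"
    and q_bnd: "\<And>l s. l < k \<Longrightarrow> s \<in> space (PiM {..<l} (\<lambda>_. Q)) \<Longrightarrow> q l s < n"
    and G[measurable]: "G \<in> borel_measurable (PiM {..<n} (\<lambda>_. Q))"
  shows "(\<integral>\<^sup>+ v. (\<integral>\<^sup>+ x. G (plant q k v x) \<partial>PiM {..<n} (\<lambda>_. Q)) \<partial>PiM {..<k} (\<lambda>_. Q))
    = (\<integral>\<^sup>+ x. G x \<partial>PiM {..<n} (\<lambda>_. Q))"
  using q_meas q_bnd
proof (induction k)
  case 0
  interpret prob_space "PiM {} (\<lambda>_. Q)"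
    using Q by (intro prob_space_PiM) auto
  show ?case by (simp add: plant_def emeasure_space_1)
next
  case (Suc k)
  interpret product_prob_space "\<lambda>_. Q"
    using Q by (simp add: product_prob_space_def product_prob_space_axioms_def
        product_sigma_finite_def prob_space_imp_sigma_finite)
  interpret Qn: prob_space "PiM {..<n} (\<lambda>_. Q)"
    using Q by (intro prob_space_PiM) auto
  have [measurable]: "(\<lambda>(v, x). plant q j v x)
      \<in> measurable (PiM {..<j} (\<lambda>_. Q) \<Otimes>\<^sub>M PiM {..<n} (\<lambda>_. Q)) (PiM {..<n} (\<lambda>_. Q))"
    if "j \<le> Suc k" for j
    using that Suc.prems by (intro measurable_plant) auto
  have "(\<lambda>v. \<integral>\<^sup>+ x. G (plant q (Suc k) v x) \<partial>PiM {..<n} (\<lambda>_. Q))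
      \<in> borel_measurable (PiM (insert k {..<k}) (\<lambda>_. Q))"
    unfolding lessThan_Suc[symmetric] by measurable
  then have "(\<integral>\<^sup>+ v. (\<integral>\<^sup>+ x. G (plant q (Suc k) v x) \<partial>PiM {..<n} (\<lambda>_. Q)) \<partial>PiM {..<Suc k} (\<lambda>_. Q))
      = (\<integral>\<^sup>+ u. (\<integral>\<^sup>+ a. (\<integral>\<^sup>+ x. G (plant q k u (x(read_index q u k := a)))
          \<partial>PiM {..<n} (\<lambda>_. Q)) \<partial>Q) \<partial>PiM {..<k} (\<lambda>_. Q))"
    unfolding lessThan_Suc by (subst product_nn_integral_insert) (auto simp: plant_Suc)
  also have "\<dots> = (\<integral>\<^sup>+ u. (\<integral>\<^sup>+ x. G (plant q k u x) \<partial>PiM {..<n} (\<lambda>_. Q)) \<partial>PiM {..<k} (\<lambda>_. Q))"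
  proof (rule nn_integral_cong)
    fix u assume u: "u \<in> space (PiM {..<k} (\<lambda>_. Q))"
    have "read_index q u k < n"
      unfolding read_index_def using u
      by (intro Suc.prems(2) reads_fresh_space) (auto simp: space_PiM PiE_iff)
    moreover have "(\<lambda>x. G (plant q k u x)) \<in> borel_measurable (PiM {..<n} (\<lambda>_. Q))"
      using u by measurable
    ultimately show "(\<integral>\<^sup>+ a. (\<integral>\<^sup>+ x. G (plant q k u (x(read_index q u k := a))) \<partial>PiM {..<n} (\<lambda>_. Q)) \<partial>Q)
        = (\<integral>\<^sup>+ x. G (plant q k u x) \<partial>PiM {..<n} (\<lambda>_. Q))"
      by (intro nn_integral_PiM_resample_coordinate[OF Q]) auto
  qed
  also have "\<dots> = (\<integral>\<^sup>+ x. G x \<partial>PiM {..<n} (\<lambda>_. Q))"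
    using Suc by simp
  finally show ?case .
qed

lemma nn_integral_reads_eq_reads_fresh:
  assumes Q: "prob_space Q"
    and q_meas: "\<And>l. l < k \<Longrightarrow> q l \<in> measurable (PiM {..<l} (\<lambda>_. Q)) (count_space UNIV)"
    and q_bnd: "\<And>l s. l < k \<Longrightarrow> s \<in> space (PiM {..<l} (\<lambda>_. Q)) \<Longrightarrow> q l s < n"
    and G: "G \<in> borel_measurable (PiM {..<n} (\<lambda>_. Q))"
    and G_eq: "\<And>x. x \<in> space (PiM {..<n} (\<lambda>_. Q)) \<Longrightarrow> G x = H (reads q x k)"
  shows "(\<integral>\<^sup>+ x. G x \<partial>PiM {..<n} (\<lambda>_. Q)) = (\<integral>\<^sup>+ v. H (reads_fresh q v k) \<partial>PiM {..<k} (\<lambda>_. Q))"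
proof -
  interpret Qn: prob_space "PiM {..<n} (\<lambda>_. Q)"
    using Q by (intro prob_space_PiM) auto
  have "(\<integral>\<^sup>+ x. G x \<partial>PiM {..<n} (\<lambda>_. Q))
      = (\<integral>\<^sup>+ v. (\<integral>\<^sup>+ x. G (plant q k v x) \<partial>PiM {..<n} (\<lambda>_. Q)) \<partial>PiM {..<k} (\<lambda>_. Q))"
    by (rule nn_integral_plant[OF Q q_meas q_bnd G, symmetric])
  also have "\<dots> = (\<integral>\<^sup>+ v. (\<integral>\<^sup>+ x. H (reads_fresh q v k) \<partial>PiM {..<n} (\<lambda>_. Q)) \<partial>PiM {..<k} (\<lambda>_. Q))"
    using plant_space[where M=Q, OF q_bnd] by (intro nn_integral_cong) (simp add: G_eq reads_plant)
  also have "\<dots> = (\<integral>\<^sup>+ v. H (reads_fresh q v k) \<partial>PiM {..<k} (\<lambda>_. Q))"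
    by (simp add: Qn.emeasure_space_1)
  finally show ?thesis .
qed

lemma minimax_le_sup_risk_if_computable_reading:
  assumes P_prob: "\<And>\<theta>. \<theta> \<in> \<Theta> \<Longrightarrow> prob_space (P \<theta>)"
    and P_sets: "\<And>\<theta>. \<theta> \<in> \<Theta> \<Longrightarrow> sets (P \<theta>) = sets M"
    and L_meas: "\<And>\<theta>. \<theta> \<in> \<Theta> \<Longrightarrow> (\<lambda>y. L y \<theta>) \<in> borel_measurable N"
    and f_meas: "f \<in> measurable (PiM {..<n} (\<lambda>_. M)) N"
    and "computable_reading M N n k f"
  shows "minimax M N P L \<Theta> k \<le> sup_risk P L \<Theta> n f"
proof -
  obtain q out where
      q_meas: "\<And>l. l < k \<Longrightarrow> q l \<in> measurable (PiM {..<l} (\<lambda>_. M)) (count_space UNIV)"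
    and q_bnd: "\<And>l s. l < k \<Longrightarrow> s \<in> space (PiM {..<l} (\<lambda>_. M)) \<Longrightarrow> q l s < n"
    and out_meas: "out \<in> measurable (PiM {..<k} (\<lambda>_. M)) N"
    and f_eq: "\<And>x. x \<in> space (PiM {..<n} (\<lambda>_. M)) \<Longrightarrow> f x = out (reads q x k)"
    using \<open>computable_reading M N n k f\<close> unfolding computable_reading_def by blast
  define g where "g v = out (reads_fresh q v k)" for v
  have g_meas: "g \<in> measurable (PiM {..<k} (\<lambda>_. M)) N"
    unfolding g_def using measurable_compose[OF measurable_reads_fresh out_meas] q_meas by simp
  have "risk P L n f \<theta> = risk P L k g \<theta>" if "\<theta> \<in> \<Theta>" for \<theta>
  proof -
    have sets_eq: "sets (PiM I (\<lambda>_. P \<theta>)) = sets (PiM I (\<lambda>_. M))" for I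
      using P_sets[OF that] by (intro sets_PiM_cong) auto
    note meas_eq = measurable_cong_sets[OF sets_eq refl]
    note space_eq = sets_eq_imp_space_eq[OF sets_eq]
    have "(\<lambda>x. ennreal (L (f x) \<theta>)) \<in> borel_measurable (PiM {..<n} (\<lambda>_. P \<theta>))"
      using measurable_compose[OF f_meas L_meas[OF that]] unfolding meas_eq by measurable
    then show ?thesis
      unfolding risk_def g_def
      using q_meas q_bnd f_eq
      by (intro nn_integral_reads_eq_reads_fresh[OF P_prob[OF that]]) (simp_all add: meas_eq space_eq)
  qed
  then have "sup_risk P L \<Theta> k g = sup_risk P L \<Theta> n f"
    by (simp add: sup_risk_def)
  then show ?thesis
    unfolding minimax_def using g_meas by (metis INF_lower)
qed

lemma minimax_antimono:
  assumes P_prob: "\<And>\<theta>. \<theta> \<in> \<Theta> \<Longrightarrow> prob_space (P \<theta>)"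
    and P_sets: "\<And>\<theta>. \<theta> \<in> \<Theta> \<Longrightarrow> sets (P \<theta>) = sets M"
    and L_meas: "\<And>\<theta>. \<theta> \<in> \<Theta> \<Longrightarrow> (\<lambda>y. L y \<theta>) \<in> borel_measurable N"
    and "m \<le> n"
  shows "minimax M N P L \<Theta> n \<le> minimax M N P L \<Theta> m"
  unfolding minimax_def
proof (rule INF_greatest)
  fix f assume f: "f \<in> measurable (PiM {..<m} (\<lambda>_. M)) N"
  define g where "g x = f (restrict x {..<m})" for x
  have g_meas: "g \<in> measurable (PiM {..<n} (\<lambda>_. M)) N"
    unfolding g_def using \<open>m \<le> n\<close> by (intro measurable_compose[OF measurable_restrict_subset f]) auto
  have "risk P L n g \<theta> = risk P L m f \<theta>" if "\<theta> \<in> \<Theta>" for \<theta>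
  proof -
    interpret product_prob_space "\<lambda>_. P \<theta>"
      using P_prob[OF that] by (simp add: product_prob_space_def product_prob_space_axioms_def
          product_sigma_finite_def prob_space_imp_sigma_finite)
    have "sets (PiM {..<m} (\<lambda>_. P \<theta>)) = sets (PiM {..<m} (\<lambda>_. M))"
      using P_sets[OF that] by (intro sets_PiM_cong) auto
    then have "f \<in> measurable (PiM {..<m} (\<lambda>_. P \<theta>)) N"
      using f measurable_cong_sets by blast
    then have "(\<lambda>x. ennreal (L (f x) \<theta>)) \<in> borel_measurable (PiM {..<m} (\<lambda>_. P \<theta>))"
      using L_meas[OF that] by measurable
    then have "risk P L m f \<theta> = (\<integral>\<^sup>+ x. ennreal (L (f (restrict x {..<m})) \<theta>) \<partial>PiM {..<n} (\<lambda>_. P \<theta>))"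
      unfolding risk_def using \<open>m \<le> n\<close>
      by (subst distr_restrict[of "{..<m}" "{..<n}"]) (auto intro: nn_integral_distr measurable_restrict_subset)
    then show ?thesis
      by (simp add: risk_def g_def)
  qed
  then have "sup_risk P L \<Theta> n g = sup_risk P L \<Theta> m f"
    by (simp add: sup_risk_def)
  then show "(INF f \<in> measurable (PiM {..<n} (\<lambda>_. M)) N. sup_risk P L \<Theta> n f) \<le> sup_risk P L \<Theta> m f"
    using g_meas by (metis INF_lower)
qed

lemma eventually_less_mult_of_decay:
  fixes R :: "nat \<Rightarrow> ennreal" and b :: "nat \<Rightarrow> nat" and \<epsilon> :: ennreal
  assumes R_antimono: "\<And>m n. m \<le> n \<Longrightarrow> R n \<le> R m"
    and R_fin_pos: "\<forall>\<^sub>F n in sequentially. 0 < R n \<and> R n < \<infinity>"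
    and R_decay: "Limsup at_top (\<lambda>a::real. limsup (\<lambda>n. R (nat \<lfloor>a * real n\<rfloor>) / R n)) = 0"
    and b: "(\<lambda>n. real (b n) / real n) \<longlonglongrightarrow> 0"
    and \<epsilon>: "0 < \<epsilon>"
  shows "\<forall>\<^sub>F n in sequentially. R n < \<epsilon> * R (b n)"
proof -
  have "\<forall>\<^sub>F a in at_top. limsup (\<lambda>n. R (nat \<lfloor>a * real n\<rfloor>) / R n) < \<epsilon>"
    using \<epsilon> R_decay by (intro Limsup_lessD) simp
  then obtain a0 :: real where a0: "\<And>a. a \<ge> a0 \<Longrightarrow> limsup (\<lambda>n. R (nat \<lfloor>a * real n\<rfloor>) / R n) < \<epsilon>"
    unfolding eventually_at_top_linorder by blast
  define a where "a = max a0 1"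
  have "a \<ge> 1" by (simp add: a_def)
  have "\<forall>\<^sub>F m in sequentially. R (nat \<lfloor>a * real m\<rfloor>) / R m < \<epsilon>"
    using a0[of a] by (intro Limsup_lessD) (simp add: a_def)
  with R_fin_pos have "\<forall>\<^sub>F m in sequentially. R (nat \<lfloor>a * real m\<rfloor>) < \<epsilon> * R m"
    by eventually_elim (subst (asm) divide_less_ennreal, auto)
  then obtain m0 where m0: "\<And>m. m \<ge> m0 \<Longrightarrow> R (nat \<lfloor>a * real m\<rfloor>) < \<epsilon> * R m"
    unfolding eventually_sequentially by blast
  have "\<forall>\<^sub>F n in sequentially. real (b n) / real n < 1 / a"
    using b \<open>a \<ge> 1\<close> by (intro order_tendstoD(2)) auto
  moreover have "\<forall>\<^sub>F n in sequentially. a * real m0 \<le> real n"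
    using filterlim_real_sequentially by (simp add: filterlim_at_top)
  moreover have "\<forall>\<^sub>F n in sequentially. 0 < n"
    by (rule eventually_gt_at_top)
  ultimately show ?thesis
  proof eventually_elim
    case (elim n)
    define m where "m = max (b n) m0"
    have "a * real (b n) \<le> real n"
      using elim \<open>a \<ge> 1\<close> by (simp add: divide_less_eq field_simps)
    then have "nat \<lfloor>a * real m\<rfloor> \<le> n"
      using elim by (simp add: m_def max_def floor_le_iff nat_le_iff)
    then have "R n \<le> R (nat \<lfloor>a * real m\<rfloor>)" by (rule R_antimono)
    also have "\<dots> < \<epsilon> * R m" by (rule m0) (simp add: m_def)
    also have "\<dots> \<le> \<epsilon> * R (b n)" by (intro mult_left_mono R_antimono) (auto simp: m_def)
    finally show ?case .
  qed
qed

lemma tendsto_ratio_top_of_decay: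
  fixes R S :: "nat \<Rightarrow> ennreal" and b :: "nat \<Rightarrow> nat"
  assumes R_antimono: "\<And>m n. m \<le> n \<Longrightarrow> R n \<le> R m"
    and R_fin_pos: "\<forall>\<^sub>F n in sequentially. 0 < R n \<and> R n < \<infinity>"
    and R_decay: "Limsup at_top (\<lambda>a::real. limsup (\<lambda>n. R (nat \<lfloor>a * real n\<rfloor>) / R n)) = 0"
    and b: "(\<lambda>n. real (b n) / real n) \<longlonglongrightarrow> 0"
    and S_ge: "\<forall>\<^sub>F n in sequentially. R (b n) \<le> S n"
  shows "((\<lambda>n. S n / R n) \<longlongrightarrow> \<infinity>) sequentially"
  unfolding infinity_ennreal_def tendsto_top_iff_ennreal
proof (intro allI impI)
  fix c :: real assume "0 \<le> c"
  have "\<forall>\<^sub>F n in sequentially. R n < ennreal (1 / (c + 1)) * R (b n)"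
    using \<open>0 \<le> c\<close> by (intro eventually_less_mult_of_decay[OF R_antimono R_fin_pos R_decay b]) auto
  with S_ge R_fin_pos show "\<forall>\<^sub>F n in sequentially. ennreal c < S n / R n"
  proof eventually_elim
    case (elim n)
    then have "R n < ennreal (1 / (c + 1)) * S n"
      by (meson mult_left_mono order_less_le_trans zero_le)
    then show ?case
      using elim \<open>0 \<le> c\<close> by (intro ennreal_less_divide_if_less_mult) auto
  qed
qed

theorem theorem4:
  fixes M :: "'x measure" and N :: "'b measure" and P :: "'t \<Rightarrow> 'x measure"
    and \<Theta> :: "'t set" and L :: "'b \<Rightarrow> 't \<Rightarrow> real"
    and \<phi> :: "nat \<Rightarrow> (nat \<Rightarrow> 'x) \<Rightarrow> 'b"
  assumes P_prob: "\<And>\<theta>. \<theta> \<in> \<Theta> \<Longrightarrow> prob_space (P \<theta>)"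
    and P_sets: "\<And>\<theta>. \<theta> \<in> \<Theta> \<Longrightarrow> sets (P \<theta>) = sets M"
    and L_meas: "\<And>\<theta>. \<theta> \<in> \<Theta> \<Longrightarrow> (\<lambda>y. L y \<theta>) \<in> borel_measurable N"
    and L_nonneg: "\<And>y \<theta>. y \<in> space N \<Longrightarrow> \<theta> \<in> \<Theta> \<Longrightarrow> L y \<theta> \<ge> 0"
    and R_fin_pos: "\<forall>\<^sub>F n in sequentially. 0 < minimax M N P L \<Theta> n \<and> minimax M N P L \<Theta> n < \<infinity>"
    and R_decay: "Limsup at_top (\<lambda>a::real. limsup (\<lambda>n.
                     minimax M N P L \<Theta> (nat \<lfloor>a * real n\<rfloor>) / minimax M N P L \<Theta> n)) = 0"
    and \<phi>_meas: "\<And>n. \<phi> n \<in> measurable (PiM {..<n} (\<lambda>_. M)) N"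
    and \<phi>_fast: "sublinear_time M N \<phi>"
  shows "((\<lambda>n. sup_risk P L \<Theta> n (\<phi> n) / minimax M N P L \<Theta> n) \<longlongrightarrow> \<infinity>) sequentially"
proof -
  obtain b :: "nat \<Rightarrow> nat" where b: "(\<lambda>n. real (b n) / real n) \<longlonglongrightarrow> 0"
    and reading: "\<forall>\<^sub>F n in sequentially. computable_reading M N n (b n) (\<phi> n)"
    using \<phi>_fast unfolding sublinear_time_def by blast
  from reading have "\<forall>\<^sub>F n in sequentially. minimax M N P L \<Theta> (b n) \<le> sup_risk P L \<Theta> n (\<phi> n)"
    by eventually_elim (rule minimax_le_sup_risk_if_computable_reading[OF P_prob P_sets L_meas \<phi>_meas])
  with R_fin_pos R_decay b show ?thesis
    by (intro tendsto_ratio_top_of_decay) (auto intro: minimax_antimono[OF P_prob P_sets L_meas])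
qed

end
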